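(* Let $R$ be a commutative Noetherian ring and $n$ a non-negative integer. Let $M$ be a finitely generated $R$-module and $N$ an $R$-module which is in dimension $<n$. Then $\operatorname{Ext}^i_R(M,N)$ and $\operatorname{Tor}_i^R(M,N)$ are in dimension $<n$ for all $i$. In particular, for every ideal $\mathfrak a$ of $R$, $\operatorname{Ext}^i_R(R/\mathfrak a,N)$ and $\operatorname{Tor}^R_i(R/\mathfrak a,N)$ are in dimension $<n$ for all $i$.
   Context: For an $R$-module $L$, $\dim\operatorname{Supp}L=\sup\{\dim R/\mathfrak p:\mathfrak p\in\operatorname{Supp}L\}$, the zero module having dimension $-\infty$. An $R$-module $L$ is "in dimension $<n$" if there is a finitely generated submodule $N'\subseteq L$ with $\dim\operatorname{Supp}(L/N')<n$. *)

theory Defs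
  imports "HOL-Library.Extended_Real" "HOL-Library.Function_Algebras"
begin

definition ideal :: "'a::comm_ring_1 set \<Rightarrow> bool" where
  "ideal I \<longleftrightarrow> 0 \<in> I \<and> (\<forall>x\<in>I. \<forall>y\<in>I. x + y \<in> I) \<and> (\<forall>r. \<forall>x\<in>I. r * x \<in> I)"

definition prime_ideal :: "'a::comm_ring_1 set \<Rightarrow> bool" where
  "prime_ideal P \<longleftrightarrow> ideal P \<and> P \<noteq> UNIV \<and> (\<forall>a b. a * b \<in> P \<longrightarrow> a \<in> P \<or> b \<in> P)"

definition ideal_gen :: "'a::comm_ring_1 set \<Rightarrow> 'a set" where
  "ideal_gen S = \<Inter>{I. ideal I \<and> S \<subseteq> I}"

definition noetherian_ring :: "'a::comm_ring_1 itself \<Rightarrow> bool" where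
  "noetherian_ring _ \<longleftrightarrow> (\<forall>I::'a set. ideal I \<longrightarrow> (\<exists>S. finite S \<and> I = ideal_gen S))"

text \<open>A strict chain of prime ideals of length k lying over p (= chain of primes of R/p).\<close>
definition prime_chain_over :: "'a::comm_ring_1 set \<Rightarrow> nat \<Rightarrow> bool" where
  "prime_chain_over p k \<longleftrightarrow> (\<exists>c::nat \<Rightarrow> 'a set. (\<forall>j\<le>k. prime_ideal (c j)) \<and> p \<subseteq> c 0
      \<and> (\<forall>j<k. c j \<subset> c (Suc j)))"

text \<open>Krull dimension of R/p (for p prime), as an extended real.\<close>
definition dim_quot :: "'a::comm_ring_1 set \<Rightarrow> ereal" where
  "dim_quot p = Sup {ereal (real k) | k. prime_chain_over p k}"

definition module :: "('a::comm_ring_1 \<Rightarrow> 'v::ab_group_add \<Rightarrow> 'v) \<Rightarrow> bool" where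
  "module sm \<longleftrightarrow> (\<forall>a x y. sm a (x + y) = sm a x + sm a y) \<and> (\<forall>a b x. sm (a + b) x = sm a x + sm b x)
     \<and> (\<forall>a b x. sm (a * b) x = sm a (sm b x)) \<and> (\<forall>x. sm 1 x = x)"

definition submod :: "('a::comm_ring_1 \<Rightarrow> 'v::ab_group_add \<Rightarrow> 'v) \<Rightarrow> 'v set \<Rightarrow> bool" where
  "submod sm X \<longleftrightarrow> 0 \<in> X \<and> (\<forall>x\<in>X. \<forall>y\<in>X. x + y \<in> X) \<and> (\<forall>a. \<forall>x\<in>X. sm a x \<in> X)"

definition span :: "('a::comm_ring_1 \<Rightarrow> 'v::ab_group_add \<Rightarrow> 'v) \<Rightarrow> 'v set \<Rightarrow> 'v set" where
  "span sm G = \<Inter>{X. submod sm X \<and> G \<subseteq> X}"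

definition fin_gen :: "('a::comm_ring_1 \<Rightarrow> 'v::ab_group_add \<Rightarrow> 'v) \<Rightarrow> bool" where
  "fin_gen sm \<longleftrightarrow> (\<exists>G. finite G \<and> span sm G = UNIV)"

text \<open>Support of the subquotient module X/Y (Y \<subseteq> X submodules):
  p \<in> Supp(X/Y) iff (X/Y)_p \<noteq> 0 iff some x \<in> X has x/1 \<noteq> 0 in (X/Y)_p,
  i.e. s x \<notin> Y for all s \<notin> p.\<close>
definition supp :: "('a::comm_ring_1 \<Rightarrow> 'v::ab_group_add \<Rightarrow> 'v) \<Rightarrow> 'v set \<Rightarrow> 'v set \<Rightarrow> 'a set set" where
  "supp sm X Y = {p. prime_ideal p \<and> (\<exists>x\<in>X. \<forall>s. s \<notin> p \<longrightarrow> sm s x \<notin> Y)}"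

text \<open>dim Supp(X/Y) = sup of dim R/p over the support (Sup {} = -\<infinity>).\<close>
definition dim_supp :: "('a::comm_ring_1 \<Rightarrow> 'v::ab_group_add \<Rightarrow> 'v) \<Rightarrow> 'v set \<Rightarrow> 'v set \<Rightarrow> ereal" where
  "dim_supp sm X Y = Sup (dim_quot ` supp sm X Y)"

text \<open>The subquotient L = X/Y is in dimension < n: there is a finitely generated submodule
  N' = (span G + Y)/Y of L (G finite, G \<subseteq> X) with dim Supp(L/N') < n, where L/N' = X/(span (G \<union> Y)).\<close>
definition in_dim_lt :: "('a::comm_ring_1 \<Rightarrow> 'v::ab_group_add \<Rightarrow> 'v) \<Rightarrow> 'v set \<Rightarrow> 'v set \<Rightarrow> nat \<Rightarrow> bool" where
  "in_dim_lt sm X Y n \<longleftrightarrow> (\<exists>G. finite G \<and> G \<subseteq> X \<and> dim_supp sm X (span sm (G \<union> Y)) < ereal (real n))"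

text \<open>R^k as functions nat \<Rightarrow> R vanishing from k on; likewise N^k.\<close>
definition fvec :: "nat \<Rightarrow> (nat \<Rightarrow> 'v::zero) set" where
  "fvec k = {v. \<forall>j\<ge>k. v j = 0}"

text \<open>Matrix D (r \<times> c) acting R^c \<rightarrow> R^r.\<close>
definition dmap :: "nat \<Rightarrow> nat \<Rightarrow> (nat \<Rightarrow> nat \<Rightarrow> 'a::comm_ring_1) \<Rightarrow> (nat \<Rightarrow> 'a) \<Rightarrow> (nat \<Rightarrow> 'a)" where
  "dmap r c D v = (\<lambda>j. if j < r then (\<Sum>l<c. D j l * v l) else 0)"

text \<open>Exact complex ... \<rightarrow> R^(k 2) --d 1--> R^(k 1) --d 0--> R^(k 0), exact at every R^(k (i+1)).
  d i is a (k i) \<times> (k (i+1)) matrix.\<close>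
definition exact_tail :: "(nat \<Rightarrow> nat) \<Rightarrow> (nat \<Rightarrow> nat \<Rightarrow> nat \<Rightarrow> 'a::comm_ring_1) \<Rightarrow> bool" where
  "exact_tail k d \<longleftrightarrow> (\<forall>i. {v \<in> fvec (k (Suc i)). dmap (k i) (k (Suc i)) (d i) v = 0}
       = dmap (k (Suc i)) (k (Suc (Suc i))) (d (Suc i)) ` fvec (k (Suc (Suc i))))"

text \<open>Augmentation R^(k 0) \<rightarrow> M, e_j \<mapsto> g j.\<close>
definition augm :: "('a::comm_ring_1 \<Rightarrow> 'm::ab_group_add \<Rightarrow> 'm) \<Rightarrow> nat \<Rightarrow> (nat \<Rightarrow> 'm) \<Rightarrow> (nat \<Rightarrow> 'a) \<Rightarrow> 'm" where
  "augm sm r g v = (\<Sum>j<r. sm (v j) (g j))"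

definition free_resolution :: "('a::comm_ring_1 \<Rightarrow> 'm::ab_group_add \<Rightarrow> 'm) \<Rightarrow> (nat \<Rightarrow> nat)
    \<Rightarrow> (nat \<Rightarrow> nat \<Rightarrow> nat \<Rightarrow> 'a) \<Rightarrow> (nat \<Rightarrow> 'm) \<Rightarrow> bool" where
  "free_resolution sm k d g \<longleftrightarrow> exact_tail k d
     \<and> augm sm (k 0) g ` fvec (k 0) = UNIV
     \<and> {v \<in> fvec (k 0). augm sm (k 0) g v = 0} = dmap (k 0) (k 1) (d 0) ` fvec (k 1)"

definition vsm :: "('a \<Rightarrow> 'n \<Rightarrow> 'n) \<Rightarrow> 'a \<Rightarrow> (nat \<Rightarrow> 'n) \<Rightarrow> (nat \<Rightarrow> 'n)" where
  "vsm sm a y = (\<lambda>j. sm a (y j))"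

text \<open>Hom(d,N): Hom(R^r,N) = N^r \<rightarrow> N^c = Hom(R^c,N) for D : R^c \<rightarrow> R^r.\<close>
definition dual_map :: "('a::comm_ring_1 \<Rightarrow> 'n::ab_group_add \<Rightarrow> 'n) \<Rightarrow> nat \<Rightarrow> nat \<Rightarrow> (nat \<Rightarrow> nat \<Rightarrow> 'a)
    \<Rightarrow> (nat \<Rightarrow> 'n) \<Rightarrow> (nat \<Rightarrow> 'n)" where
  "dual_map sm r c D y = (\<lambda>l. if l < c then (\<Sum>j<r. sm (D j l) (y j)) else 0)"

text \<open>d \<otimes> N: R^c \<otimes> N = N^c \<rightarrow> N^r = R^r \<otimes> N.\<close>
definition tens_map :: "('a::comm_ring_1 \<Rightarrow> 'n::ab_group_add \<Rightarrow> 'n) \<Rightarrow> nat \<Rightarrow> nat \<Rightarrow> (nat \<Rightarrow> nat \<Rightarrow> 'a)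
    \<Rightarrow> (nat \<Rightarrow> 'n) \<Rightarrow> (nat \<Rightarrow> 'n)" where
  "tens_map sm r c D x = (\<lambda>j. if j < r then (\<Sum>l<c. sm (D j l) (x l)) else 0)"

text \<open>Ext^i(M,N) = ext_X / ext_Y: cohomology of Hom(F,N).\<close>
definition ext_X :: "('a::comm_ring_1 \<Rightarrow> 'n::ab_group_add \<Rightarrow> 'n) \<Rightarrow> (nat \<Rightarrow> nat) \<Rightarrow> (nat \<Rightarrow> nat \<Rightarrow> nat \<Rightarrow> 'a)
    \<Rightarrow> nat \<Rightarrow> (nat \<Rightarrow> 'n) set" where
  "ext_X sm k d i = {y \<in> fvec (k i). dual_map sm (k i) (k (Suc i)) (d i) y = 0}"

definition ext_Y :: "('a::comm_ring_1 \<Rightarrow> 'n::ab_group_add \<Rightarrow> 'n) \<Rightarrow> (nat \<Rightarrow> nat) \<Rightarrow> (nat \<Rightarrow> nat \<Rightarrow> nat \<Rightarrow> 'a)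
    \<Rightarrow> nat \<Rightarrow> (nat \<Rightarrow> 'n) set" where
  "ext_Y sm k d i = (if i = 0 then {0}
     else dual_map sm (k (i - 1)) (k i) (d (i - 1)) ` fvec (k (i - 1)))"

text \<open>Tor_i(M,N) = tor_X / tor_Y: homology of F \<otimes> N.\<close>
definition tor_X :: "('a::comm_ring_1 \<Rightarrow> 'n::ab_group_add \<Rightarrow> 'n) \<Rightarrow> (nat \<Rightarrow> nat) \<Rightarrow> (nat \<Rightarrow> nat \<Rightarrow> nat \<Rightarrow> 'a)
    \<Rightarrow> nat \<Rightarrow> (nat \<Rightarrow> 'n) set" where
  "tor_X sm k d i = (if i = 0 then fvec (k 0)
     else {x \<in> fvec (k i). tens_map sm (k (i - 1)) (k i) (d (i - 1)) x = 0})"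

definition tor_Y :: "('a::comm_ring_1 \<Rightarrow> 'n::ab_group_add \<Rightarrow> 'n) \<Rightarrow> (nat \<Rightarrow> nat) \<Rightarrow> (nat \<Rightarrow> nat \<Rightarrow> nat \<Rightarrow> 'a)
    \<Rightarrow> nat \<Rightarrow> (nat \<Rightarrow> 'n) set" where
  "tor_Y sm k d i = tens_map sm (k i) (k (Suc i)) (d i) ` fvec (k (Suc i))"

end

theory Submission
  imports Defs
begin

text \<open>
  Ext and Tor, computed from a finite free resolution, are subquotients \<open>Z/B\<close> of some
  \<open>N\<^sup>m\<close>. If \<open>\<langle>G\<rangle> \<subseteq> N\<close> is finitely generated with \<open>dim Supp (N/\<langle>G\<rangle>) < n\<close>, then
  \<open>Supp (N\<^sup>m/\<langle>G\<^sup>m\<rangle>) \<subseteq> Supp (N/\<langle>G\<rangle>)\<close>, since each of the finitely many coordinates of an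
  element can be moved into \<open>\<langle>G\<rangle>\<close> by a scalar outside a given prime. As \<open>R\<close> is
  Noetherian, \<open>Z \<inter> \<langle>G\<^sup>m\<rangle>\<close> is finitely generated, and \<open>Z/(Z \<inter> \<langle>G\<^sup>m\<rangle>)\<close> embeds into
  \<open>N\<^sup>m/\<langle>G\<^sup>m\<rangle>\<close>; dividing further by \<open>B\<close> only shrinks the support.
\<close>

lemma module_scale_right_distrib: "module sm \<Longrightarrow> sm a (x + y) = sm a x + sm a y"
  unfolding module_def by blast

lemma module_scale_left_distrib: "module sm \<Longrightarrow> sm (a + b) x = sm a x + sm b x"
  unfolding module_def by blast

lemma module_scale_mult: "module sm \<Longrightarrow> sm (a * b) x = sm a (sm b x)"
  unfolding module_def by blast

lemma module_scale_one: "module sm \<Longrightarrow> sm 1 x = x"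
  unfolding module_def by blast

lemma module_scale_zero_right: "module sm \<Longrightarrow> sm a 0 = 0"
  using module_scale_right_distrib[of sm a 0 0] by simp

lemma module_scale_zero_left: "module sm \<Longrightarrow> sm 0 x = 0"
  using module_scale_left_distrib[of sm 0 0 x] by simp

lemma module_scale_minus_left: "module sm \<Longrightarrow> sm (- a) x = - sm a x"
  using module_scale_left_distrib[of sm "- a" a x] module_scale_zero_left[of sm x]
  by (simp add: eq_neg_iff_add_eq_0)

lemma module_scale_commute: "module sm \<Longrightarrow> sm a (sm b x) = sm b (sm a x)"
  by (metis module_scale_mult mult.commute)

lemma module_scale_sum_right: "module sm \<Longrightarrow> sm a (\<Sum>j\<in>A. f j) = (\<Sum>j\<in>A. sm a (f j))"
  by (induction A rule: infinite_finite_induct)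
    (simp_all add: module_scale_zero_right module_scale_right_distrib)

lemma module_vsm: "module sm \<Longrightarrow> module (vsm sm)"
  unfolding module_def vsm_def by (auto simp: fun_eq_iff)

lemma submod_zero: "submod sm X \<Longrightarrow> 0 \<in> X"
  unfolding submod_def by blast

lemma submod_add: "submod sm X \<Longrightarrow> x \<in> X \<Longrightarrow> y \<in> X \<Longrightarrow> x + y \<in> X"
  unfolding submod_def by blast

lemma submod_scale: "submod sm X \<Longrightarrow> x \<in> X \<Longrightarrow> sm a x \<in> X"
  unfolding submod_def by blast

lemma submod_minus:
  assumes "module sm" "submod sm X" "x \<in> X"
  shows "- x \<in> X"
  using submod_scale[OF assms(2,3), of "- 1"]
  by (simp add: module_scale_minus_left[OF assms(1)] module_scale_one[OF assms(1)])

lemma submod_diff: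
  assumes "module sm" "submod sm X" "x \<in> X" "y \<in> X"
  shows "x - y \<in> X"
  using submod_add[OF assms(2,3) submod_minus[OF assms(1,2,4)]] by simp

lemma submod_Int: "submod sm A \<Longrightarrow> submod sm B \<Longrightarrow> submod sm (A \<inter> B)"
  unfolding submod_def by auto

lemma submod_span: "submod sm (span sm G)"
  unfolding submod_def span_def by auto

lemma span_superset: "G \<subseteq> span sm G"
  unfolding span_def by auto

lemma span_least: "submod sm X \<Longrightarrow> G \<subseteq> X \<Longrightarrow> span sm G \<subseteq> X"
  unfolding span_def by auto

lemma span_mono: "G \<subseteq> H \<Longrightarrow> span sm G \<subseteq> span sm H"
  by (meson span_least span_superset submod_span subset_trans)

lemma span_insert:
  assumes md: "module sm"
  shows "span sm (insert g G) = {sm r g + y | r y. y \<in> span sm G}"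
    (is "_ = ?R")
proof
  have "submod sm ?R"
    unfolding submod_def
  proof (intro conjI ballI allI)
    show "0 \<in> ?R"
      using module_scale_zero_left[OF md] submod_zero[OF submod_span] by force
  next
    fix x y assume "x \<in> ?R" "y \<in> ?R"
    then obtain r1 y1 r2 y2 where "x = sm r1 g + y1" "y = sm r2 g + y2"
      and "y1 \<in> span sm G" "y2 \<in> span sm G" by blast
    then have "x + y = sm (r1 + r2) g + (y1 + y2)" "y1 + y2 \<in> span sm G"
      by (auto simp: module_scale_left_distrib[OF md] submod_add[OF submod_span] algebra_simps)
    then show "x + y \<in> ?R" by blast
  next
    fix a x assume "x \<in> ?R"
    then obtain r y where "x = sm r g + y" "y \<in> span sm G" by blast
    then have "sm a x = sm (a * r) g + sm a y" "sm a y \<in> span sm G"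
      by (auto simp: module_scale_right_distrib[OF md] module_scale_mult[OF md]
          submod_scale[OF submod_span])
    then show "sm a x \<in> ?R" by blast
  qed
  moreover have "insert g G \<subseteq> ?R"
  proof -
    have "g = sm 1 g + 0" "\<And>h. h = sm 0 g + h"
      by (simp_all add: module_scale_one[OF md] module_scale_zero_left[OF md])
    then show ?thesis
      using submod_zero[OF submod_span] span_superset[of G sm] by blast
  qed
  ultimately show "span sm (insert g G) \<subseteq> ?R" by (rule span_least)
next
  have "g \<in> span sm (insert g G)" "span sm G \<subseteq> span sm (insert g G)"
    by (simp_all add: span_superset[THEN subsetD] span_mono subset_insertI)
  then show "?R \<subseteq> span sm (insert g G)"
    using submod_add[OF submod_span] submod_scale[OF submod_span] by blast
qed

lemma ideal_gen_superset: "S \<subseteq> ideal_gen S"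
  unfolding ideal_gen_def by auto

lemma ideal_gen_least: "ideal I \<Longrightarrow> S \<subseteq> I \<Longrightarrow> ideal_gen S \<subseteq> I"
  unfolding ideal_gen_def by auto

definition lead_coeff_ideal :: "('a::comm_ring_1 \<Rightarrow> 'v::ab_group_add \<Rightarrow> 'v) \<Rightarrow> 'v \<Rightarrow> 'v set \<Rightarrow> 'v set \<Rightarrow> 'a set"
  where "lead_coeff_ideal sm g G L = {r. \<exists>y\<in>span sm G. sm r g + y \<in> L}"

lemma ideal_lead_coeff_ideal:
  assumes md: "module sm" and L: "submod sm L"
  shows "ideal (lead_coeff_ideal sm g G L)"
  unfolding ideal_def lead_coeff_ideal_def
proof (intro conjI ballI allI)
  show "0 \<in> {r. \<exists>y\<in>span sm G. sm r g + y \<in> L}"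
    using module_scale_zero_left[OF md] submod_zero[OF submod_span] submod_zero[OF L] by force
next
  fix a b assume "a \<in> {r. \<exists>y\<in>span sm G. sm r g + y \<in> L}" "b \<in> {r. \<exists>y\<in>span sm G. sm r g + y \<in> L}"
  then obtain y z where "y \<in> span sm G" "z \<in> span sm G" "sm a g + y \<in> L" "sm b g + z \<in> L"
    by blast
  then have "y + z \<in> span sm G" "sm (a + b) g + (y + z) \<in> L"
    using submod_add[OF submod_span] submod_add[OF L, of "sm a g + y" "sm b g + z"]
    by (auto simp: module_scale_left_distrib[OF md] algebra_simps)
  then show "a + b \<in> {r. \<exists>y\<in>span sm G. sm r g + y \<in> L}" by blast
next
  fix c a assume "a \<in> {r. \<exists>y\<in>span sm G. sm r g + y \<in> L}"
  then obtain y where "y \<in> span sm G" "sm a g + y \<in> L" by blast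
  then have "sm c y \<in> span sm G" "sm (c * a) g + sm c y \<in> L"
    using submod_scale[OF submod_span] submod_scale[OF L, of "sm a g + y" c]
    by (auto simp: module_scale_mult[OF md] module_scale_right_distrib[OF md])
  then show "c * a \<in> {r. \<exists>y\<in>span sm G. sm r g + y \<in> L}" by blast
qed

lemma subset_if_lead_coeff_ideal_subset:
  assumes md: "module sm" and L: "submod sm L" "L \<subseteq> span sm (insert g G)"
    and L': "submod sm L'" "L' \<subseteq> L" "L \<inter> span sm G \<subseteq> L'"
    and lead: "lead_coeff_ideal sm g G L \<subseteq> lead_coeff_ideal sm g G L'"
  shows "L \<subseteq> L'"
proof
  fix x assume "x \<in> L"
  then obtain r y where x: "x = sm r g + y" "y \<in> span sm G"
    using L(2) span_insert[OF md] by blast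
  then have "r \<in> lead_coeff_ideal sm g G L'"
    using \<open>x \<in> L\<close> lead unfolding lead_coeff_ideal_def by blast
  then obtain z where z: "z \<in> span sm G" "sm r g + z \<in> L'"
    unfolding lead_coeff_ideal_def by blast
  have "x - (sm r g + z) = y - z" using x(1) by simp
  moreover have "y - z \<in> span sm G"
    using submod_diff[OF md submod_span x(2) z(1)] .
  moreover have "x - (sm r g + z) \<in> L"
    using submod_diff[OF md L(1) \<open>x \<in> L\<close>] z(2) L'(2) by blast
  ultimately have "x - (sm r g + z) \<in> L'"
    using L'(3) by (metis IntI subsetD)
  then show "x \<in> L'"
    using submod_add[OF L'(1) _ z(2)] by fastforce
qed

text \<open>Hilbert basis argument: lifts to \<open>L\<close> of generators of the leading-coefficient ideal,
  together with generators of \<open>L \<inter> \<langle>G\<rangle>\<close>, generate \<open>L\<close>.\<close>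
lemma finitely_generated_submod_insert:
  fixes sm :: "'a::comm_ring_1 \<Rightarrow> 'v::ab_group_add \<Rightarrow> 'v"
  assumes noeth: "noetherian_ring TYPE('a)" and md: "module sm"
    and IH: "\<And>L. submod sm L \<Longrightarrow> L \<subseteq> span sm G \<Longrightarrow> \<exists>H. finite H \<and> span sm H = L"
    and L: "submod sm L" "L \<subseteq> span sm (insert g G)"
  shows "\<exists>H. finite H \<and> span sm H = L"
proof -
  obtain H0 where H0: "finite H0" "span sm H0 = L \<inter> span sm G"
    using IH[OF submod_Int[OF L(1) submod_span]] by blast
  obtain S where S: "finite S" "lead_coeff_ideal sm g G L = ideal_gen S"
    using noeth ideal_lead_coeff_ideal[OF md L(1)] unfolding noetherian_ring_def by blast
  have "\<forall>s\<in>S. \<exists>l\<in>L. l - sm s g \<in> span sm G"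
  proof
    fix s assume "s \<in> S"
    then obtain y where "y \<in> span sm G" "sm s g + y \<in> L"
      using S(2) ideal_gen_superset[of S] unfolding lead_coeff_ideal_def by blast
    then show "\<exists>l\<in>L. l - sm s g \<in> span sm G" by force
  qed
  then obtain lift where lift: "\<And>s. s \<in> S \<Longrightarrow> lift s - sm s g \<in> span sm G \<and> lift s \<in> L"
    by metis
  define H where "H = lift ` S \<union> H0"
  have HL: "span sm H \<subseteq> L"
    using lift H0(2) span_superset[of H0 sm] by (auto simp: H_def intro!: span_least[OF L(1)])
  have "S \<subseteq> lead_coeff_ideal sm g G (span sm H)"
  proof
    fix s assume "s \<in> S"
    then have "sm s g + (lift s - sm s g) \<in> span sm H"
      using span_superset[of H sm] by (auto simp: H_def)
    then show "s \<in> lead_coeff_ideal sm g G (span sm H)"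
      using lift[OF \<open>s \<in> S\<close>] unfolding lead_coeff_ideal_def by blast
  qed
  then have "lead_coeff_ideal sm g G L \<subseteq> lead_coeff_ideal sm g G (span sm H)"
    using S(2) ideal_gen_least[OF ideal_lead_coeff_ideal[OF md submod_span]] by simp
  moreover have "L \<inter> span sm G \<subseteq> span sm H"
    using H0(2) span_mono[of H0 H sm] by (auto simp: H_def)
  ultimately have "span sm H = L"
    using subset_if_lead_coeff_ideal_subset[OF md L submod_span HL] HL by blast
  moreover have "finite H"
    using S(1) H0(1) by (simp add: H_def)
  ultimately show ?thesis by blast
qed

lemma finitely_generated_submod_span:
  fixes sm :: "'a::comm_ring_1 \<Rightarrow> 'v::ab_group_add \<Rightarrow> 'v"
  assumes "noetherian_ring TYPE('a)" "module sm" "finite G" "submod sm L" "L \<subseteq> span sm G"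
  shows "\<exists>H. finite H \<and> span sm H = L"
  using assms(3-5)
proof (induction G arbitrary: L rule: finite_induct)
  case empty
  then have "L = span sm {}"
    using span_least[OF empty.prems(1), of "{}"] by blast
  then show ?case by blast
next
  case (insert g G)
  then show ?case using finitely_generated_submod_insert[OF assms(1,2)] by blast
qed

lemma prime_ideal_one_notin: "prime_ideal p \<Longrightarrow> 1 \<notin> p"
proof
  assume "prime_ideal p" "1 \<in> p"
  then have "r \<in> p" for r
    unfolding prime_ideal_def ideal_def by (metis mult.right_neutral)
  then show False
    using \<open>prime_ideal p\<close> unfolding prime_ideal_def by blast
qed

lemma prime_ideal_prod_notin:
  assumes "prime_ideal p" "\<And>j. j \<in> A \<Longrightarrow> f j \<notin> p"
  shows "prod f A \<notin> p"
  using assms(2)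
proof (induction A rule: infinite_finite_induct)
  case (insert j A)
  then show ?case using assms(1) unfolding prime_ideal_def by auto
qed (simp_all add: prime_ideal_one_notin[OF assms(1)])

definition single_vec :: "nat \<Rightarrow> 'n::zero \<Rightarrow> nat \<Rightarrow> 'n"
  where "single_vec j a = (\<lambda>i. if i = j then a else 0)"

definition single_vecs :: "nat \<Rightarrow> 'n::zero set \<Rightarrow> (nat \<Rightarrow> 'n) set"
  where "single_vecs m G = {single_vec j g | j g. j < m \<and> g \<in> G}"

lemma finite_single_vecs: "finite G \<Longrightarrow> finite (single_vecs m G)"
proof -
  assume "finite G"
  moreover have "single_vecs m G = (\<lambda>(j, g). single_vec j g) ` ({..<m} \<times> G)"
    unfolding single_vecs_def by auto
  ultimately show ?thesis by simp
qed

lemma submod_fvec: "module sm \<Longrightarrow> submod (vsm sm) (fvec m)"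
  unfolding submod_def fvec_def vsm_def by (simp add: module_scale_zero_right)

lemma single_vec_in_span_single_vecs:
  assumes md: "module sm" and "j < m" "a \<in> span sm G"
  shows "single_vec j a \<in> span (vsm sm) (single_vecs m G)"
proof -
  let ?S = "span (vsm sm) (single_vecs m G)"
  have "submod sm {a. single_vec j a \<in> ?S}"
    unfolding submod_def
  proof (intro conjI ballI allI)
    show "0 \<in> {a. single_vec j a \<in> ?S}"
      using submod_zero[OF submod_span, of "vsm sm" "single_vecs m G"]
      by (simp add: single_vec_def zero_fun_def)
  next
    fix x y assume "x \<in> {a. single_vec j a \<in> ?S}" "y \<in> {a. single_vec j a \<in> ?S}"
    moreover have "single_vec j (x + y) = single_vec j x + single_vec j y"
      unfolding single_vec_def by auto
    ultimately show "x + y \<in> {a. single_vec j a \<in> ?S}"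
      using submod_add[OF submod_span] by simp
  next
    fix c x assume "x \<in> {a. single_vec j a \<in> ?S}"
    moreover have "single_vec j (sm c x) = vsm sm c (single_vec j x)"
      unfolding single_vec_def vsm_def by (auto simp: module_scale_zero_right[OF md])
    ultimately show "sm c x \<in> {a. single_vec j a \<in> ?S}"
      using submod_scale[OF submod_span] by simp
  qed
  moreover have "G \<subseteq> {a. single_vec j a \<in> ?S}"
    using span_superset[of "single_vecs m G" "vsm sm"] \<open>j < m\<close> by (auto simp: single_vecs_def)
  ultimately show ?thesis
    using span_least \<open>a \<in> span sm G\<close> by blast
qed

lemma fvec_in_span_single_vecs:
  assumes md: "module sm" and v: "v \<in> fvec m" and coords: "\<And>j. j < m \<Longrightarrow> v j \<in> span sm G"
  shows "v \<in> span (vsm sm) (single_vecs m G)"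
proof -
  let ?S = "span (vsm sm) (single_vecs m G)"
  have "(\<lambda>i. if i < k then v i else 0) \<in> ?S" if "k \<le> m" for k
    using that
  proof (induction k)
    case 0
    then show ?case
      using submod_zero[OF submod_span, of "vsm sm" "single_vecs m G"] by (simp add: zero_fun_def)
  next
    case (Suc k)
    have "(\<lambda>i. if i < Suc k then v i else 0) = (\<lambda>i. if i < k then v i else 0) + single_vec k (v k)"
      by (auto simp: single_vec_def fun_eq_iff)
    moreover have "single_vec k (v k) \<in> ?S"
      using Suc.prems coords single_vec_in_span_single_vecs[OF md] by simp
    ultimately show ?case
      using Suc submod_add[OF submod_span] by simp
  qed
  moreover have "v = (\<lambda>i. if i < m then v i else 0)"
    using v unfolding fvec_def by (auto simp: fun_eq_iff)
  ultimately show ?thesis by force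
qed

lemma supp_fvec_subset:
  assumes md: "module sm"
  shows "supp (vsm sm) (fvec m) (span (vsm sm) (single_vecs m G)) \<subseteq> supp sm UNIV (span sm G)"
proof
  fix p assume "p \<in> supp (vsm sm) (fvec m) (span (vsm sm) (single_vecs m G))"
  then obtain x where p: "prime_ideal p" and x: "x \<in> fvec m"
    and x_nonzero: "\<And>s. s \<notin> p \<Longrightarrow> vsm sm s x \<notin> span (vsm sm) (single_vecs m G)"
    unfolding supp_def by blast
  show "p \<in> supp sm UNIV (span sm G)"
  proof (rule ccontr)
    assume "p \<notin> supp sm UNIV (span sm G)"
    then have "\<forall>y. \<exists>s. s \<notin> p \<and> sm s y \<in> span sm G"
      using p unfolding supp_def by blast
    then obtain t where t: "\<And>y. t y \<notin> p" "\<And>y. sm (t y) y \<in> span sm G"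
      by metis
    define s where "s = (\<Prod>j<m. t (x j))"
    have "vsm sm s x j \<in> span sm G" if "j < m" for j
    proof -
      have "s = (\<Prod>i\<in>{..<m} - {j}. t (x i)) * t (x j)"
        unfolding s_def using that prod.remove[of "{..<m}" j] by (simp add: ac_simps)
      then have "vsm sm s x j = sm (\<Prod>i\<in>{..<m} - {j}. t (x i)) (sm (t (x j)) (x j))"
        by (simp add: vsm_def module_scale_mult[OF md])
      then show ?thesis
        using submod_scale[OF submod_span t(2)] by simp
    qed
    then have "vsm sm s x \<in> span (vsm sm) (single_vecs m G)"
      using fvec_in_span_single_vecs[OF md submod_scale[OF submod_fvec[OF md] x]] by blast
    moreover have "s \<notin> p"
      unfolding s_def by (intro prime_ideal_prod_notin[OF p] t(1))
    ultimately show False using x_nonzero by blast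
  qed
qed

lemma supp_subset:
  assumes "submod sm X" "X \<subseteq> X'" "X \<inter> Y' \<subseteq> Y"
  shows "supp sm X Y \<subseteq> supp sm X' Y'"
proof
  fix p assume "p \<in> supp sm X Y"
  then obtain x where "prime_ideal p" "x \<in> X" and x: "\<And>s. s \<notin> p \<Longrightarrow> sm s x \<notin> Y"
    unfolding supp_def by blast
  moreover have "sm s x \<notin> Y'" if "s \<notin> p" for s
    using x[OF that] submod_scale[OF assms(1) \<open>x \<in> X\<close>] assms(3) by blast
  ultimately show "p \<in> supp sm X' Y'"
    unfolding supp_def using assms(2) by auto
qed

lemma dim_supp_mono: "supp sm X Y \<subseteq> supp sm' X' Y' \<Longrightarrow> dim_supp sm X Y \<le> dim_supp sm' X' Y'"
  unfolding dim_supp_def by (rule Sup_subset_mono) (rule image_mono)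

lemma in_dim_lt_submod_fvec:
  fixes sm :: "'a::comm_ring_1 \<Rightarrow> 'n::ab_group_add \<Rightarrow> 'n"
  assumes noeth: "noetherian_ring TYPE('a)" and md: "module sm"
    and N: "in_dim_lt sm UNIV {0} n"
    and X: "submod (vsm sm) X" "X \<subseteq> fvec m"
  shows "in_dim_lt (vsm sm) X Y n"
proof -
  obtain G where G: "finite G" "dim_supp sm UNIV (span sm (G \<union> {0})) < ereal (real n)"
    using N unfolding in_dim_lt_def by blast
  let ?Gm = "single_vecs m (G \<union> {0})"
  obtain H where H: "finite H" "span (vsm sm) H = X \<inter> span (vsm sm) ?Gm"
    using finitely_generated_submod_span[OF noeth module_vsm[OF md]
        finite_single_vecs[of "G \<union> {0}" m] submod_Int[OF X(1) submod_span]] G(1) by auto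
  have "X \<inter> span (vsm sm) ?Gm \<subseteq> span (vsm sm) (H \<union> Y)"
    using H(2) span_mono[of H "H \<union> Y" "vsm sm"] by blast
  then have "supp (vsm sm) X (span (vsm sm) (H \<union> Y)) \<subseteq> supp (vsm sm) (fvec m) (span (vsm sm) ?Gm)"
    by (rule supp_subset[OF X])
  also have "\<dots> \<subseteq> supp sm UNIV (span sm (G \<union> {0}))"
    by (rule supp_fvec_subset[OF md])
  finally have "dim_supp (vsm sm) X (span (vsm sm) (H \<union> Y)) \<le> dim_supp sm UNIV (span sm (G \<union> {0}))"
    by (rule dim_supp_mono)
  then have "dim_supp (vsm sm) X (span (vsm sm) (H \<union> Y)) < ereal (real n)"
    using G(2) by (rule le_less_trans)
  moreover have "H \<subseteq> X"
    using H(2) span_superset[of H "vsm sm"] by blast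
  ultimately show ?thesis
    unfolding in_dim_lt_def using H(1) by blast
qed

lemma submod_fvec_kernel:
  assumes md: "module sm" and F: "F 0 = 0" "\<And>y z. F (y + z) = F y + F z"
    "\<And>a y. F (vsm sm a y) = vsm sm a (F y)"
  shows "submod (vsm sm) {y \<in> fvec r. F y = 0}"
  using submod_fvec[OF md, of r] F module_scale_zero_right[OF module_vsm[OF md]]
  unfolding submod_def by auto

lemma dual_map_linear:
  assumes md: "module sm"
  shows "dual_map sm r c D 0 = 0"
    and "dual_map sm r c D (y + z) = dual_map sm r c D y + dual_map sm r c D z"
    and "dual_map sm r c D (vsm sm a y) = vsm sm a (dual_map sm r c D y)"
  unfolding dual_map_def vsm_def
  by (simp_all add: fun_eq_iff sum.distrib module_scale_zero_right[OF md]
      module_scale_right_distrib[OF md] module_scale_sum_right[OF md] module_scale_commute[OF md])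

lemma tens_map_linear:
  assumes md: "module sm"
  shows "tens_map sm r c D 0 = 0"
    and "tens_map sm r c D (y + z) = tens_map sm r c D y + tens_map sm r c D z"
    and "tens_map sm r c D (vsm sm a y) = vsm sm a (tens_map sm r c D y)"
  unfolding tens_map_def vsm_def
  by (simp_all add: fun_eq_iff sum.distrib module_scale_zero_right[OF md]
      module_scale_right_distrib[OF md] module_scale_sum_right[OF md] module_scale_commute[OF md])

lemma submod_ext_X: "module sm \<Longrightarrow> submod (vsm sm) (ext_X sm k d i)"
  unfolding ext_X_def by (intro submod_fvec_kernel dual_map_linear)

lemma ext_X_subset_fvec: "ext_X sm k d i \<subseteq> fvec (k i)"
  unfolding ext_X_def by blast

lemma submod_tor_X: "module sm \<Longrightarrow> submod (vsm sm) (tor_X sm k d i)"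
  unfolding tor_X_def by (simp add: submod_fvec submod_fvec_kernel tens_map_linear)

lemma tor_X_subset_fvec: "tor_X sm k d i \<subseteq> fvec (k i)"
  unfolding tor_X_def by auto

theorem corollary2p16:
  fixes smM :: "'a::comm_ring_1 \<Rightarrow> 'm::ab_group_add \<Rightarrow> 'm"
    and smN :: "'a \<Rightarrow> 'n::ab_group_add \<Rightarrow> 'n"
    and n :: nat
  assumes "noetherian_ring TYPE('a)"
    and "module smN"
    and "in_dim_lt smN UNIV {0} n"
  shows "(module smM \<and> fin_gen smM \<longrightarrow>
           (\<forall>k d g. free_resolution smM k d g \<longrightarrow>
              (\<forall>i. in_dim_lt (vsm smN) (ext_X smN k d i) (ext_Y smN k d i) n
                 \<and> in_dim_lt (vsm smN) (tor_X smN k d i) (tor_Y smN k d i) n)))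
       \<and> (\<forall>(a::'a set) k d. ideal a \<and> k 0 = 1 \<and> exact_tail k d
            \<and> dmap 1 (k 1) (d 0) ` fvec (k 1) = {v \<in> fvec 1. v 0 \<in> a} \<longrightarrow>
              (\<forall>i. in_dim_lt (vsm smN) (ext_X smN k d i) (ext_Y smN k d i) n
                 \<and> in_dim_lt (vsm smN) (tor_X smN k d i) (tor_Y smN k d i) n))"
proof -
  have "in_dim_lt (vsm smN) (ext_X smN k d i) (ext_Y smN k d i) n" for k d i
    by (rule in_dim_lt_submod_fvec[OF assms submod_ext_X[OF assms(2)] ext_X_subset_fvec])
  moreover have "in_dim_lt (vsm smN) (tor_X smN k d i) (tor_Y smN k d i) n" for k d i
    by (rule in_dim_lt_submod_fvec[OF assms submod_tor_X[OF assms(2)] tor_X_subset_fvec])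
  ultimately show ?thesis by simp
qed

end
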